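(* Let $R$ be a ring, $M$ an $R$-module of finite length, and $S:=R(+)M$ the idealization of $M$. Let $\{S_i\}_{i=0}^n$ be the Loewy series of the ring extension $R\subseteq S$. Then $S_i=R(+)M_i$ for each $i\in\{0,\ldots,n\}$, where $\{M_i\}$ is the Loewy series of the lattice $\Lambda(M)$ of $R$-submodules of $M$. In particular $\pounds[R,S]=\lambda(M)$.
   Context: All rings are commutative with identity. The idealization $R(+)M$ is $R\times M$ with componentwise addition and multiplication $(r,m)(s,n)=(rs,rn+sm)$; $R$ is identified with $\{(r,0)\}$ and for a submodule $N$ of $M$, $R(+)N$ is a subring. For a ring extension $A\subseteq B$, $[A,B]$ is the lattice of $A$-subalgebras; $T\subset U$ minimal means $[T,U]=\{T,U\}$; atoms of $[A,B]$ are $C$ with $A\subset C$ minimal; the socle $\mathcal S[A,B]$ is the product of all atoms. Loewy series of $A\subseteq B$: $S_0=A$, $S_{i+1}=\mathcal S[S_i,B]$ while $S_i\neq B$; $\pounds[A,B]$ is the least $n$ with $S_n=B$. The Loewy series of $\Lambda(M)$ is $M_0=0$, $M_{i+1}=$ the sum of all submodules $N\supseteq M_i$ with $N/M_i$ simple, while $M_i\neq M$; $\lambda(M)$ is the least $n$ with $M_n=M$. *)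

theory Defs
  imports Main "HOL.Modules"
begin

definition finite_length ::
  "('a::comm_ring_1 \<Rightarrow> 'b::ab_group_add \<Rightarrow> 'b) \<Rightarrow> bool" where
  "finite_length scale \<longleftrightarrow>
     (\<exists>n::nat. \<forall>cs::'b set list.
        (\<forall>N\<in>set cs. module.subspace scale N) \<and> sorted_wrt (\<subset>) cs \<longrightarrow> length cs \<le> n)"

text \<open>N/L is simple: L \<subset> N submodules with no submodule strictly in between.\<close>
definition simple_over ::
  "('a::comm_ring_1 \<Rightarrow> 'b::ab_group_add \<Rightarrow> 'b) \<Rightarrow> 'b set \<Rightarrow> 'b set \<Rightarrow> bool" where
  "simple_over scale L N \<longleftrightarrow> module.subspace scale N \<and> L \<subset> N \<and>
     (\<forall>P. module.subspace scale P \<and> L \<subseteq> P \<and> P \<subseteq> N \<longrightarrow> P = L \<or> P = N)"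

text \<open>Sum of all submodules N \<supseteq> L with N/L simple (the smallest submodule containing L and all of them).\<close>
definition mod_socle ::
  "('a::comm_ring_1 \<Rightarrow> 'b::ab_group_add \<Rightarrow> 'b) \<Rightarrow> 'b set \<Rightarrow> 'b set" where
  "mod_socle scale L = \<Inter>{P. module.subspace scale P \<and> L \<subseteq> P \<and>
       (\<forall>N. simple_over scale L N \<longrightarrow> N \<subseteq> P)}"

definition mod_loewy ::
  "('a::comm_ring_1 \<Rightarrow> 'b::ab_group_add \<Rightarrow> 'b) \<Rightarrow> nat \<Rightarrow> 'b set" where
  "mod_loewy scale i = (mod_socle scale ^^ i) {0}"

definition mod_loewy_length ::
  "('a::comm_ring_1 \<Rightarrow> 'b::ab_group_add \<Rightarrow> 'b) \<Rightarrow> nat" where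
  "mod_loewy_length scale = (LEAST n. mod_loewy scale n = UNIV)"

text \<open>Elements of R(+)M are pairs; R is identified with {(r,0)}.\<close>
definition idz_mult ::
  "('a::comm_ring_1 \<Rightarrow> 'b::ab_group_add \<Rightarrow> 'b) \<Rightarrow> 'a \<times> 'b \<Rightarrow> 'a \<times> 'b \<Rightarrow> 'a \<times> 'b" where
  "idz_mult scale x y = (fst x * fst y, scale (fst x) (snd y) + scale (fst y) (snd x))"

definition idz_base :: "('a::comm_ring_1 \<times> 'b::ab_group_add) set" where
  "idz_base = {(r, 0) | r. True}"

definition idz_sub :: "'b set \<Rightarrow> ('a::comm_ring_1 \<times> 'b::ab_group_add) set" where
  "idz_sub N = {(r, n) | r n. n \<in> N}"

definition idz_subalg ::
  "('a::comm_ring_1 \<Rightarrow> 'b::ab_group_add \<Rightarrow> 'b) \<Rightarrow> ('a \<times> 'b) set \<Rightarrow> bool" where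
  "idz_subalg scale T \<longleftrightarrow> idz_base \<subseteq> T \<and>
     (\<forall>x\<in>T. \<forall>y\<in>T. (fst x + fst y, snd x + snd y) \<in> T \<and> (- fst x, - snd x) \<in> T \<and> idz_mult scale x y \<in> T)"

definition idz_minimal ::
  "('a::comm_ring_1 \<Rightarrow> 'b::ab_group_add \<Rightarrow> 'b) \<Rightarrow> ('a \<times> 'b) set \<Rightarrow> ('a \<times> 'b) set \<Rightarrow> bool" where
  "idz_minimal scale T U \<longleftrightarrow> idz_subalg scale T \<and> idz_subalg scale U \<and> T \<subset> U \<and>
     (\<forall>V. idz_subalg scale V \<and> T \<subseteq> V \<and> V \<subseteq> U \<longrightarrow> V = T \<or> V = U)"

text \<open>Socle of [T,S]: product (compositum) of all atoms C, i.e. T \<subset> C minimal;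
  realised as the smallest subalgebra containing T and all atoms.\<close>
definition idz_socle ::
  "('a::comm_ring_1 \<Rightarrow> 'b::ab_group_add \<Rightarrow> 'b) \<Rightarrow> ('a \<times> 'b) set \<Rightarrow> ('a \<times> 'b) set" where
  "idz_socle scale T = \<Inter>{V. idz_subalg scale V \<and> T \<subseteq> V \<and>
       (\<forall>C. idz_minimal scale T C \<longrightarrow> C \<subseteq> V)}"

definition idz_loewy ::
  "('a::comm_ring_1 \<Rightarrow> 'b::ab_group_add \<Rightarrow> 'b) \<Rightarrow> nat \<Rightarrow> ('a \<times> 'b) set" where
  "idz_loewy scale i = (idz_socle scale ^^ i) idz_base"

definition idz_loewy_length ::
  "('a::comm_ring_1 \<Rightarrow> 'b::ab_group_add \<Rightarrow> 'b) \<Rightarrow> nat" where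
  "idz_loewy_length scale = (LEAST n. idz_loewy scale n = UNIV)"

end

theory Submission
  imports Defs
begin

text \<open>The map N \<mapsto> R(+)N is an order isomorphism from the submodules of M onto the
  R-subalgebras of R(+)M: a subalgebra T contains R, so (r, n) \<in> T iff (0, n) \<in> T, and T is
  R(+)N for N = {n. (0, n) \<in> T}. Hence atoms of [R(+)L, R(+)M] are the R(+)N with N/L simple,
  socles correspond to socles, and the two Loewy series correspond term by term.\<close>

lemma idz_sub_subset_iff:
  "((idz_sub N :: ('a::comm_ring_1 \<times> 'b::ab_group_add) set) \<subseteq> idz_sub P) = (N \<subseteq> P)"
  by (auto simp: idz_sub_def)

lemma idz_sub_eq_iff:
  "((idz_sub N :: ('a::comm_ring_1 \<times> 'b::ab_group_add) set) = idz_sub P) = (N = P)"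
  by (metis idz_sub_subset_iff order_antisym order_refl)

lemma idz_sub_UNIV: "(idz_sub UNIV :: ('a::comm_ring_1 \<times> 'b::ab_group_add) set) = UNIV"
  by (auto simp: idz_sub_def)

lemma Inter_image_idz_sub:
  "\<Inter> ((idz_sub :: 'b::ab_group_add set \<Rightarrow> ('a::comm_ring_1 \<times> 'b) set) ` F) = idz_sub (\<Inter> F)"
  by (auto simp: idz_sub_def)

lemma idz_base_eq_idz_sub_zero:
  "(idz_base :: ('a::comm_ring_1 \<times> 'b::ab_group_add) set) = idz_sub {0}"
  by (auto simp: idz_sub_def idz_base_def)

context module
begin

lemma idz_subalg_idz_sub: "subspace N \<Longrightarrow> idz_subalg scale (idz_sub N :: ('a \<times> 'b) set)"
  unfolding idz_subalg_def idz_base_def idz_sub_def idz_mult_def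
  by (auto simp: subspace_0 subspace_add subspace_neg subspace_scale)

lemma idz_subalg_iff:
  "idz_subalg scale (T :: ('a \<times> 'b) set) \<longleftrightarrow> (\<exists>N. subspace N \<and> T = idz_sub N)"
proof
  assume T: "idz_subalg scale T"
  define N where "N = {n. (0::'a, n) \<in> T}"
  have base: "(r, 0) \<in> T" for r
    using T by (auto simp: idz_subalg_def idz_base_def)
  have add: "(r + s, m + n) \<in> T" if "(r, m) \<in> T" "(s, n) \<in> T" for r s m n
    using T that by (force simp: idz_subalg_def)
  have "T = idz_sub N"
  proof (auto simp: idz_sub_def N_def)
    fix r n assume "(r, n) \<in> T"
    from add[OF this base[of "-r"]] show "(0, n) \<in> T" by simp
  next
    fix r n assume "(0, n) \<in> T"
    from add[OF this base[of r]] show "(r, n) \<in> T" by simp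
  qed
  moreover have "subspace N"
  proof (rule subspaceI)
    show "0 \<in> N" using base by (simp add: N_def)
  next
    fix x y assume "x \<in> N" "y \<in> N"
    then show "x + y \<in> N" using add by (force simp: N_def)
  next
    fix c x assume "x \<in> N"
    then have "idz_mult scale (c, 0) (0, x) \<in> T"
      using T base by (simp add: idz_subalg_def N_def)
    then show "c *s x \<in> N" by (simp add: idz_mult_def N_def)
  qed
  ultimately show "\<exists>N. subspace N \<and> T = idz_sub N" by blast
qed (auto intro: idz_subalg_idz_sub)

lemma Collect_idz_subalg:
  "{T. idz_subalg scale T \<and> Q T} = idz_sub ` {N. subspace N \<and> Q (idz_sub N :: ('a \<times> 'b) set)}"
  by (auto simp: idz_subalg_iff)

lemma idz_minimal_idz_sub_iff:
  assumes "subspace L"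
  shows "idz_minimal scale (idz_sub L :: ('a \<times> 'b) set) C \<longleftrightarrow>
         (\<exists>N. C = idz_sub N \<and> simple_over scale L N)"
proof
  assume min: "idz_minimal scale (idz_sub L :: ('a \<times> 'b) set) C"
  then obtain N where N: "subspace N" "C = idz_sub N"
    by (auto simp: idz_minimal_def idz_subalg_iff)
  have "P = L \<or> P = N" if "subspace P" "L \<subseteq> P" "P \<subseteq> N" for P
  proof -
    have "idz_sub P = (idz_sub L :: ('a \<times> 'b) set) \<or> idz_sub P = C"
      using min N that idz_subalg_idz_sub[of P] by (simp add: idz_minimal_def idz_sub_subset_iff)
    then show ?thesis using N by (simp add: idz_sub_eq_iff)
  qed
  with min N show "\<exists>N. C = idz_sub N \<and> simple_over scale L N"
    by (auto simp: idz_minimal_def simple_over_def less_le idz_sub_subset_iff idz_sub_eq_iff)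
next
  assume "\<exists>N. C = idz_sub N \<and> simple_over scale L N"
  then obtain N where N: "C = idz_sub N" "simple_over scale L N" by blast
  have "V = idz_sub L \<or> V = C"
    if "idz_subalg scale V" "idz_sub L \<subseteq> V" "V \<subseteq> C" for V
    using that N by (auto simp: idz_subalg_iff simple_over_def idz_sub_subset_iff)
  with N assms show "idz_minimal scale (idz_sub L :: ('a \<times> 'b) set) C"
    by (auto simp: idz_minimal_def simple_over_def less_le idz_sub_subset_iff idz_sub_eq_iff
        intro: idz_subalg_idz_sub)
qed

lemma idz_socle_idz_sub:
  assumes "subspace L"
  shows "idz_socle scale (idz_sub L :: ('a \<times> 'b) set) = idz_sub (mod_socle scale L)"
proof -
  have "(\<forall>C. idz_minimal scale (idz_sub L) C \<longrightarrow> C \<subseteq> (idz_sub P :: ('a \<times> 'b) set)) \<longleftrightarrow>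
        (\<forall>N. simple_over scale L N \<longrightarrow> N \<subseteq> P)" for P
    by (simp add: idz_minimal_idz_sub_iff[OF assms]) (metis idz_sub_subset_iff)
  then show ?thesis
    unfolding idz_socle_def mod_socle_def Collect_idz_subalg
    by (simp add: idz_sub_subset_iff Inter_image_idz_sub)
qed

lemma subspace_mod_socle: "subspace (mod_socle scale L)"
  unfolding mod_socle_def by (rule subspace_Inter) auto

lemma subspace_mod_loewy: "subspace (mod_loewy scale i)"
  by (cases i) (simp_all add: mod_loewy_def subspace_0 subspace_mod_socle)

lemma idz_loewy_eq: "idz_loewy scale i = (idz_sub (mod_loewy scale i) :: ('a \<times> 'b) set)"
proof (induction i)
  case 0
  then show ?case by (simp add: mod_loewy_def idz_loewy_def idz_base_eq_idz_sub_zero)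
next
  case (Suc i)
  have "idz_loewy scale (Suc i) = idz_socle scale (idz_loewy scale i)"
    by (simp add: idz_loewy_def)
  also have "\<dots> = idz_sub (mod_socle scale (mod_loewy scale i))"
    by (simp add: Suc idz_socle_idz_sub subspace_mod_loewy)
  finally show ?case by (simp add: mod_loewy_def)
qed

end

theorem proposition8p15:
  fixes scale :: "'a::comm_ring_1 \<Rightarrow> 'b::ab_group_add \<Rightarrow> 'b"
  assumes "module scale"
    and "finite_length scale"
  shows "(\<forall>i \<le> idz_loewy_length scale.
            idz_loewy scale i = (idz_sub (mod_loewy scale i) :: ('a \<times> 'b) set))
         \<and> idz_loewy_length scale = mod_loewy_length scale"
proof -
  note loewy_eq = module.idz_loewy_eq[OF assms(1)]
  have "idz_loewy scale n = (UNIV :: ('a \<times> 'b) set) \<longleftrightarrow> mod_loewy scale n = UNIV" for n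
    by (metis loewy_eq idz_sub_UNIV idz_sub_eq_iff)
  then have "idz_loewy_length scale = mod_loewy_length scale"
    by (simp add: idz_loewy_length_def mod_loewy_length_def)
  with loewy_eq show ?thesis by blast
qed

end
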